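(* Let $(X,\ell)$ and $(Y,\ell')$ be filtered vector spaces over a field $\kappa$ such that $\ell(X\setminus\{0\})$ and $\ell'(Y\setminus\{0\})$ are well-ordered subsets of $\mathbb{R}$, and let $\phi\colon X\to Y$ be a $\kappa$-linear isomorphism. Then there is an $\ell$-orthogonal basis $\{v_\alpha\}$ of $X$ such that $\{\phi(v_\alpha)\}$ is an $\ell'$-orthogonal basis of $Y$.
   Context: A filtered vector space over a field $\kappa$ is a pair $(V,\ell)$ with $V$ a $\kappa$-vector space and $\ell\colon V\to\mathbb{R}\cup\{-\infty\}$ such that $\ell(v)=-\infty$ iff $v=0$, $\ell(cv)=\ell(v)$ for $c\in\kappa\setminus\{0\}$, and $\ell(v+w)\le\max\{\ell(v),\ell(w)\}$. A subset $S\subset V\setminus\{0\}$ is $\ell$-orthogonal if $\ell(\sum_{i=1}^n c_iv_i)=\max\{\ell(v_i):c_i\neq0\}$ for all finitely many distinct $v_1,\dots,v_n\in S$ and $c_i\in\kappa$. *)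

theory Defs
  imports Main "HOL-Library.Extended_Real"
begin

text \<open>A filtered vector space (V, l) over a field: l maps into the reals together
with minus infinity (modelled in ereal, with the value plus infinity excluded).\<close>
definition filtered_vs :: "('k::field \<Rightarrow> 'v::ab_group_add \<Rightarrow> 'v) \<Rightarrow> ('v \<Rightarrow> ereal) \<Rightarrow> bool" where
  "filtered_vs scale l \<longleftrightarrow> vector_space scale
     \<and> (\<forall>v. l v \<noteq> \<infinity>)
     \<and> (\<forall>v. l v = -\<infinity> \<longleftrightarrow> v = 0)
     \<and> (\<forall>c v. c \<noteq> 0 \<longrightarrow> l (scale c v) = l v)
     \<and> (\<forall>v w. l (v + w) \<le> max (l v) (l w))"

definition well_ordered_set :: "ereal set \<Rightarrow> bool" where
  "well_ordered_set S \<longleftrightarrow> (\<forall>T. T \<subseteq> S \<longrightarrow> T \<noteq> {} \<longrightarrow> (\<exists>m\<in>T. \<forall>t\<in>T. m \<le> t))"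

text \<open>l-orthogonal subset S (of V minus 0): for every finite F in S and coefficients c,
l (sum c_v v) is the maximum of l v over v in F with c v nonzero (empty max = -infinity).\<close>
definition l_orthogonal :: "('k::field \<Rightarrow> 'v::ab_group_add \<Rightarrow> 'v) \<Rightarrow> ('v \<Rightarrow> ereal) \<Rightarrow> 'v set \<Rightarrow> bool" where
  "l_orthogonal scale l S \<longleftrightarrow> 0 \<notin> S \<and>
     (\<forall>F c. finite F \<longrightarrow> F \<subseteq> S \<longrightarrow>
        l (\<Sum>v\<in>F. scale (c v) v) = Sup (l ` {v\<in>F. c v \<noteq> 0}))"

definition is_basis :: "('k::field \<Rightarrow> 'v::ab_group_add \<Rightarrow> 'v) \<Rightarrow> 'v set \<Rightarrow> bool" where
  "is_basis scale B \<longleftrightarrow> \<not> module.dependent scale B \<and> module.span scale B = UNIV"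

end

(*
  Pull l' back along \<phi>: then X carries two filtrations l1 = l and l2 = l' \<circ> \<phi>, and it suffices
  to find a basis of X that is orthogonal for both. For every pair of levels (s, t), choose a
  complement C(s,t) of the span of the vectors lying strictly below (s, t) in the product order,
  inside the subspace {v. l1 v \<le> s \<and> l2 v \<le> t}, and let B be the union of all C(s,t).
  Vectors of B sharing a bilevel are independent modulo the strictly lower part; hence if the
  l1-leading terms of a combination cancelled, its l1- and l2-leading part would lie in that lower
  part, so l1 of the combination is the maximum of l1 over its support, and symmetrically for l2.
  B spans X by well-founded induction on (l1 v, l2 v) in lexicographic order, which is
  well-founded because both sets of values are well-ordered.
*)
theory Submission
  imports Defs
begin

lemma well_ordered_set_insert:
  assumes "well_ordered_set S"
  shows "well_ordered_set (insert x S)"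
  unfolding well_ordered_set_def
proof (intro allI impI)
  fix T assume T: "T \<subseteq> insert x S" "T \<noteq> {}"
  show "\<exists>m\<in>T. \<forall>t\<in>T. m \<le> t"
  proof (cases "T - {x} = {}")
    case True
    then show ?thesis using T(2) by blast
  next
    case False
    moreover have "T - {x} \<subseteq> S" using T(1) by blast
    ultimately obtain m where m: "m \<in> T - {x}" "\<forall>t\<in>T - {x}. m \<le> t"
      using assms unfolding well_ordered_set_def by blast
    show ?thesis
    proof (cases "x \<in> T \<and> x < m")
      case True
      then show ?thesis using m by (metis DiffI less_imp_le order_trans singletonD order_refl)
    next
      case False
      then show ?thesis using m by (auto intro!: bexI[of _ m])
    qed
  qed
qed

lemma wf_less_on_well_ordered_set:
  assumes "well_ordered_set S"
  shows "wf {(x, y). x \<in> S \<and> x < y}"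
proof (rule wfI_min)
  fix x and Q :: "ereal set" assume "x \<in> Q"
  show "\<exists>z\<in>Q. \<forall>y. (y, z) \<in> {(x, y). x \<in> S \<and> x < y} \<longrightarrow> y \<notin> Q"
  proof (cases "Q \<inter> S = {}")
    case True
    then show ?thesis using \<open>x \<in> Q\<close> by blast
  next
    case False
    then obtain m where m: "m \<in> Q \<inter> S" "\<forall>t\<in>Q \<inter> S. m \<le> t"
      using assms unfolding well_ordered_set_def by blast
    show ?thesis
    proof (intro bexI[of _ m] allI impI)
      fix y assume "(y, m) \<in> {(x, y). x \<in> S \<and> x < y}"
      then show "y \<notin> Q" using m(2) by (auto dest: leD)
    qed (use m(1) in blast)
  qed
qed

lemma l_orthogonalD:
  "l_orthogonal scale l S \<Longrightarrow> finite F \<Longrightarrow> F \<subseteq> S \<Longrightarrow>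
    l (\<Sum>v\<in>F. scale (c v) v) = Sup (l ` {v\<in>F. c v \<noteq> 0})"
  unfolding l_orthogonal_def by blast

definition independent_mod :: "('a::field \<Rightarrow> 'b::ab_group_add \<Rightarrow> 'b) \<Rightarrow> 'b set \<Rightarrow> 'b set \<Rightarrow> bool"
  where "independent_mod scale U C \<longleftrightarrow> (\<forall>F c. finite F \<longrightarrow> F \<subseteq> C \<longrightarrow>
     (\<Sum>b\<in>F. scale (c b) b) \<in> module.span scale U \<longrightarrow> (\<forall>b\<in>F. c b = 0))"

context vector_space
begin

lemma independent_modD:
  "independent_mod scale U C \<Longrightarrow> finite F \<Longrightarrow> F \<subseteq> C \<Longrightarrow>
    (\<Sum>b\<in>F. scale (c b) b) \<in> span U \<Longrightarrow> b \<in> F \<Longrightarrow> c b = 0"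
  unfolding independent_mod_def by blast

lemma independent_mod_subset: "independent_mod scale U C \<Longrightarrow> D \<subseteq> C \<Longrightarrow> independent_mod scale U D"
  unfolding independent_mod_def by blast

lemma independent_mod_disjoint_span:
  assumes "independent_mod scale U C"
  shows "C \<inter> span U = {}"
proof -
  have "b \<notin> span U" if "b \<in> C" for b
    using independent_modD[OF assms, of "{b}" "\<lambda>_. 1" b] that by auto
  then show ?thesis by blast
qed

lemma exists_complement_mod_span:
  assumes "subspace W" "U \<subseteq> W"
  shows "\<exists>C\<subseteq>W. W \<subseteq> span (U \<union> C) \<and> independent_mod scale U C"
proof -
  obtain A where A: "A \<subseteq> U" "independent A" "U \<subseteq> span A"
    by (rule maximal_independent_subset)
  obtain E where E: "A \<subseteq> E" "E \<subseteq> W" "independent E" "W \<subseteq> span E"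
    by (rule maximal_independent_subset_extend[of A W]) (use A assms(2) in auto)
  have "E \<subseteq> U \<union> (E - A)"
    using A(1) by auto
  then have "W \<subseteq> span (U \<union> (E - A))"
    using E(4) span_mono by blast
  moreover have "independent_mod scale U (E - A)"
    unfolding independent_mod_def
  proof (intro allI impI)
    fix F c assume F: "finite F" "F \<subseteq> E - A" and "(\<Sum>b\<in>F. scale (c b) b) \<in> span U"
    moreover have "span U \<subseteq> span A"
      using A(3) by (rule span_minimal) simp
    ultimately have "(\<Sum>b\<in>F. scale (c b) b) \<in> span A"
      by blast
    then obtain T r where T: "finite T" "T \<subseteq> A"
      and sum_eq: "(\<Sum>b\<in>F. scale (c b) b) = (\<Sum>a\<in>T. scale (r a) a)"
      by (auto simp: span_explicit)
    define u where "u v = (if v \<in> F then c v else - r v)" for v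
    have disjoint: "F \<inter> T = {}"
      using F(2) T(2) by blast
    have "(\<Sum>v\<in>F \<union> T. scale (u v) v) = (\<Sum>v\<in>F. scale (u v) v) + (\<Sum>v\<in>T. scale (u v) v)"
      using F(1) T(1) disjoint by (rule sum.union_disjoint)
    also have "(\<Sum>v\<in>F. scale (u v) v) = (\<Sum>v\<in>F. scale (c v) v)"
      by (simp add: u_def)
    also have "(\<Sum>v\<in>T. scale (u v) v) = (\<Sum>v\<in>T. - scale (r v) v)"
      using disjoint by (intro sum.cong) (auto simp: u_def scale_minus_left)
    finally have sum_zero: "(\<Sum>v\<in>F \<union> T. scale (u v) v) = 0"
      using sum_eq by (simp add: sum_negf)
    have "F \<union> T \<subseteq> E"
      using F(2) T(2) E(1) by blast
    then have "u b = 0" if "b \<in> F" for b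
      using independentD[OF E(3) _ _ sum_zero] F(1) T(1) that by blast
    then show "\<forall>b\<in>F. c b = 0"
      by (simp add: u_def)
  qed
  moreover have "E - A \<subseteq> W"
    using E(2) by blast
  ultimately show ?thesis
    by blast
qed

end

locale filtration =
  fixes scale :: "'a::field \<Rightarrow> 'b::ab_group_add \<Rightarrow> 'b" and l :: "'b \<Rightarrow> ereal"
  assumes filtered_vs: "filtered_vs scale l"
begin

sublocale vector_space scale
  using filtered_vs by (simp add: filtered_vs_def)

lemma l_eq_minf_iff [simp]: "l v = -\<infinity> \<longleftrightarrow> v = 0"
  using filtered_vs by (simp add: filtered_vs_def)

lemma l_zero [simp]: "l 0 = -\<infinity>"
  by simp

lemma l_scale [simp]: "c \<noteq> 0 \<Longrightarrow> l (scale c v) = l v"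
  using filtered_vs by (simp add: filtered_vs_def)

lemma l_scale_le: "l (scale c v) \<le> l v"
  by (cases "c = 0") simp_all

lemma l_add_le: "l (v + w) \<le> max (l v) (l w)"
  using filtered_vs by (simp add: filtered_vs_def)

lemma l_uminus [simp]: "l (- v) = l v"
  using l_scale[of "-1" v] by (simp add: scale_minus_left)

lemma l_diff_le: "l (v - w) \<le> max (l v) (l w)"
  using l_add_le[of v "- w"] by simp

lemma l_add_eq_left:
  assumes "l w < l v"
  shows "l (v + w) = l v"
proof (rule antisym)
  show "l (v + w) \<le> l v"
    using l_add_le[of v w] assms by simp
  show "l v \<le> l (v + w)"
    using l_diff_le[of "v + w" w] assms by (auto simp: max_def split: if_splits)
qed

lemma l_sum_le: "finite S \<Longrightarrow> (\<And>x. x \<in> S \<Longrightarrow> l (f x) \<le> s) \<Longrightarrow> l (sum f S) \<le> s"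
proof (induction S rule: finite_induct)
  case (insert x F)
  then show ?case using l_add_le[of "f x" "sum f F"] by (simp add: order_trans)
qed simp

lemma l_sum_less:
  "finite S \<Longrightarrow> (\<And>x. x \<in> S \<Longrightarrow> l (f x) < s) \<Longrightarrow> s \<noteq> -\<infinity> \<Longrightarrow> l (sum f S) < s"
proof (induction S rule: finite_induct)
  case empty
  then show ?case by (simp add: ereal_infty_less(2))
next
  case (insert x F)
  then show ?case using l_add_le[of "f x" "sum f F"] by (simp add: order_le_less_trans)
qed

lemma well_ordered_set_range:
  assumes "well_ordered_set (l ` (UNIV - {0}))"
  shows "well_ordered_set (range l)"
proof -
  have "range l = insert (-\<infinity>) (l ` (UNIV - {0}))"
    by (auto simp: image_iff) (metis l_zero)
  then show ?thesis using well_ordered_set_insert[OF assms] by simp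
qed

lemma independent_if_l_orthogonal:
  assumes "l_orthogonal scale l S"
  shows "independent S"
proof
  assume "dependent S"
  then obtain T u v where T: "finite T" "T \<subseteq> S" "v \<in> T" "u v \<noteq> 0"
    and sum_zero: "(\<Sum>v\<in>T. scale (u v) v) = 0"
    by (auto simp: dependent_explicit)
  have "l v \<le> Sup (l ` {w\<in>T. u w \<noteq> 0})"
    using T(3,4) by (intro Sup_upper) auto
  also have "\<dots> = l (\<Sum>v\<in>T. scale (u v) v)"
    using assms T(1,2) by (simp add: l_orthogonalD)
  finally have "v = 0"
    using sum_zero by simp
  moreover have "0 \<notin> S"
    using assms unfolding l_orthogonal_def by blast
  ultimately show False
    using T(2,3) by blast
qed

lemma subspace_l_le: "subspace {v. l v \<le> s}"
proof (rule subspaceI)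
  fix x y assume "x \<in> {v. l v \<le> s}" "y \<in> {v. l v \<le> s}"
  then show "x + y \<in> {v. l v \<le> s}"
    using order_trans[OF l_add_le[of x y]] by simp
next
  fix c x assume "x \<in> {v. l v \<le> s}"
  then show "scale c x \<in> {v. l v \<le> s}"
    using order_trans[OF l_scale_le[of c x]] by simp
qed simp

lemma l_orthogonal_if_level_sums:
  assumes zero_notin: "0 \<notin> B"
    and level_sum: "\<And>F c s. finite F \<Longrightarrow> F \<subseteq> B \<Longrightarrow> F \<noteq> {} \<Longrightarrow>
      (\<forall>b\<in>F. l b = s \<and> c b \<noteq> 0) \<Longrightarrow> l (\<Sum>b\<in>F. scale (c b) b) = s"
  shows "l_orthogonal scale l B"
  unfolding l_orthogonal_def
proof (intro conjI allI impI)
  fix F and c :: "'b \<Rightarrow> 'a" assume "finite F" and "F \<subseteq> B"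
  define S where "S = {b\<in>F. c b \<noteq> 0}"
  have S: "finite S" "S \<subseteq> B" "\<And>b. b \<in> S \<Longrightarrow> c b \<noteq> 0"
    using \<open>finite F\<close> \<open>F \<subseteq> B\<close> by (auto simp: S_def)
  have "(\<Sum>b\<in>F. scale (c b) b) = (\<Sum>b\<in>S. scale (c b) b)"
    unfolding S_def using \<open>finite F\<close> by (intro sum.mono_neutral_right) auto
  moreover have "l (\<Sum>b\<in>S. scale (c b) b) = Sup (l ` S)"
  proof (cases "S = {}")
    case True
    then show ?thesis by (simp add: bot_ereal_def)
  next
    case False
    define s where "s = Max (l ` S)"
    define top where "top = {b\<in>S. l b = s}"
    have "s \<in> l ` S" "\<And>b. b \<in> S \<Longrightarrow> l b \<le> s"
      using S(1) False by (simp_all add: s_def)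
    then have "top \<noteq> {}" and "s \<noteq> -\<infinity>"
      using S(2) zero_notin by (auto simp: top_def) (metis subsetD)
    have "l (\<Sum>b\<in>top. scale (c b) b) = s"
      using S \<open>top \<noteq> {}\<close> by (intro level_sum) (auto simp: top_def)
    moreover have "l (\<Sum>b\<in>S - top. scale (c b) b) < s"
      using S \<open>\<And>b. b \<in> S \<Longrightarrow> l b \<le> s\<close> \<open>s \<noteq> -\<infinity>\<close>
      by (intro l_sum_less) (auto simp: top_def order.order_iff_strict)
    moreover have "(\<Sum>b\<in>S. scale (c b) b) = (\<Sum>b\<in>top. scale (c b) b) + (\<Sum>b\<in>S - top. scale (c b) b)"
      using S(1) by (simp add: top_def sum.subset_diff[of top S])
    ultimately show ?thesis
      using S(1) False by (simp add: l_add_eq_left s_def cSup_eq_Max)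
  qed
  ultimately show "l (\<Sum>b\<in>F. scale (c b) b) = Sup (l ` {b\<in>F. c b \<noteq> 0})"
    by (simp add: S_def)
qed (fact zero_notin)

end

locale bifiltration = vector_space scale + F1: filtration scale l1 + F2: filtration scale l2
  for scale :: "'a::field \<Rightarrow> 'b::ab_group_add \<Rightarrow> 'b" and l1 l2 :: "'b \<Rightarrow> ereal"
begin

definition sublevel :: "ereal \<Rightarrow> ereal \<Rightarrow> 'b set" where
  "sublevel s t = {v. l1 v \<le> s \<and> l2 v \<le> t}"

definition lower :: "ereal \<Rightarrow> ereal \<Rightarrow> 'b set" where
  "lower s t = {v. l1 v < s \<and> l2 v \<le> t} \<union> {v. l1 v \<le> s \<and> l2 v < t}"

definition independent_mod_lower :: "'b set \<Rightarrow> bool" where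
  "independent_mod_lower B \<longleftrightarrow>
     (\<forall>s t. independent_mod scale (lower s t) {b\<in>B. l1 b = s \<and> l2 b = t})"

lemma subspace_sublevel: "subspace (sublevel s t)"
proof -
  have "sublevel s t = {v. l1 v \<le> s} \<inter> {v. l2 v \<le> t}"
    by (auto simp: sublevel_def)
  then show ?thesis
    using F1.subspace_l_le F2.subspace_l_le by (simp add: subspace_inter)
qed

lemma lower_subset_sublevel: "lower s t \<subseteq> sublevel s t"
  by (auto simp: lower_def sublevel_def)

lemma zero_notin_if_independent_mod_lower:
  assumes "independent_mod_lower B"
  shows "0 \<notin> B"
proof
  assume "0 \<in> B"
  then have "0 \<in> {b\<in>B. l1 b = -\<infinity> \<and> l2 b = -\<infinity>}"
    by simp
  moreover have "independent_mod scale (lower (-\<infinity>) (-\<infinity>)) {b\<in>B. l1 b = -\<infinity> \<and> l2 b = -\<infinity>}"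
    using assms unfolding independent_mod_lower_def by blast
  ultimately show False
    using independent_mod_disjoint_span span_zero by blast
qed

lemma l1_sum_eq_if_independent_mod_lower:
  assumes B: "independent_mod_lower B"
    and F: "finite F" "F \<subseteq> B" "F \<noteq> {}" "\<forall>b\<in>F. l1 b = s \<and> c b \<noteq> 0"
  shows "l1 (\<Sum>b\<in>F. scale (c b) b) = s"
proof -
  define y where "y = (\<Sum>b\<in>F. scale (c b) b)"
  have "l1 y \<le> s"
    unfolding y_def using F by (intro F1.l_sum_le) auto
  moreover have "\<not> l1 y < s"
  \<comment> \<open>otherwise the l2-leading part of the combination lies in \<open>span (lower s t)\<close>\<close>
  proof
    assume "l1 y < s"
    define t where "t = Max (l2 ` F)"
    define top where "top = {b\<in>F. l2 b = t}"
    have "t \<in> l2 ` F" and l2_le: "\<And>b. b \<in> F \<Longrightarrow> l2 b \<le> t"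
      using F(1,3) by (simp_all add: t_def)
    then have "top \<noteq> {}" and "t \<noteq> -\<infinity>"
      using F(2) zero_notin_if_independent_mod_lower[OF B] by (auto simp: top_def) (metis subsetD)
    define z where "z = (\<Sum>b\<in>F - top. scale (c b) b)"
    have "l2 z < t"
      unfolding z_def using F(1,4) l2_le \<open>t \<noteq> -\<infinity>\<close>
      by (intro F2.l_sum_less) (auto simp: top_def order.order_iff_strict)
    moreover have "l1 z \<le> s"
      unfolding z_def using F by (intro F1.l_sum_le) auto
    moreover have "l2 y \<le> t"
      unfolding y_def using F(1,4) l2_le by (intro F2.l_sum_le) auto
    ultimately have "y - z \<in> span (lower s t)"
      using \<open>l1 y < s\<close> by (intro span_diff span_base) (auto simp: lower_def)
    moreover have "y - z = (\<Sum>b\<in>top. scale (c b) b)"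
      using F(1) by (simp add: y_def z_def top_def sum.subset_diff[of "top" F])
    moreover have "independent_mod scale (lower s t) top"
      using B F(2,4) unfolding independent_mod_lower_def
      by (rule_tac independent_mod_subset) (auto simp: top_def)
    moreover obtain b where "b \<in> top"
      using \<open>top \<noteq> {}\<close> by blast
    ultimately have "c b = 0"
      using F(1) by (intro independent_modD[of "lower s t" "top"]) (auto simp: top_def)
    then show False
      using \<open>b \<in> top\<close> F(4) by (auto simp: top_def)
  qed
  ultimately show ?thesis
    by (simp add: y_def)
qed

lemma l_orthogonal_l1_if_independent_mod_lower:
  "independent_mod_lower B \<Longrightarrow> l_orthogonal scale l1 B"
  by (intro F1.l_orthogonal_if_level_sums zero_notin_if_independent_mod_lower
      l1_sum_eq_if_independent_mod_lower)

lemma l_orthogonal_if_independent_mod_lower: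
  assumes "independent_mod_lower B"
  shows "l_orthogonal scale l1 B" "l_orthogonal scale l2 B"
proof -
  interpret swap: bifiltration scale l2 l1
    by (simp add: bifiltration_def vector_space_axioms F1.filtration_axioms F2.filtration_axioms)
  have "swap.independent_mod_lower B"
    unfolding swap.independent_mod_lower_def
  proof (intro allI)
    fix s t
    have "swap.lower s t = lower t s" "{b\<in>B. l2 b = s \<and> l1 b = t} = {b\<in>B. l1 b = t \<and> l2 b = s}"
      by (auto simp: swap.lower_def lower_def)
    then show "independent_mod scale (swap.lower s t) {b\<in>B. l2 b = s \<and> l1 b = t}"
      using assms by (simp add: independent_mod_lower_def)
  qed
  then show "l_orthogonal scale l1 B" "l_orthogonal scale l2 B"
    using assms by (simp_all add: l_orthogonal_l1_if_independent_mod_lower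
        swap.l_orthogonal_l1_if_independent_mod_lower)
qed

definition level_complement :: "ereal \<Rightarrow> ereal \<Rightarrow> 'b set" where
  "level_complement s t = (SOME C. C \<subseteq> sublevel s t \<and> sublevel s t \<subseteq> span (lower s t \<union> C)
     \<and> independent_mod scale (lower s t) C)"

lemma level_complement:
  "level_complement s t \<subseteq> sublevel s t"
  "sublevel s t \<subseteq> span (lower s t \<union> level_complement s t)"
  "independent_mod scale (lower s t) (level_complement s t)"
  using someI_ex[OF exists_complement_mod_span[OF subspace_sublevel lower_subset_sublevel, of s t]]
  unfolding level_complement_def by blast+

lemma level_of_level_complement:
  assumes "b \<in> level_complement s t"
  shows "l1 b = s \<and> l2 b = t"
proof -
  have "b \<in> sublevel s t"
    using level_complement(1) assms by blast
  moreover have "b \<notin> lower s t"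
    using independent_mod_disjoint_span[OF level_complement(3)] span_base assms by blast
  ultimately show ?thesis
    by (auto simp: sublevel_def lower_def)
qed

lemma independent_mod_lower_level_complements:
  "independent_mod_lower (\<Union>s t. level_complement s t)"
  unfolding independent_mod_lower_def
proof (intro allI)
  fix s t
  have "{b \<in> (\<Union>s t. level_complement s t). l1 b = s \<and> l2 b = t} \<subseteq> level_complement s t"
    using level_of_level_complement by blast
  then show "independent_mod scale (lower s t) {b \<in> (\<Union>s t. level_complement s t). l1 b = s \<and> l2 b = t}"
    by (rule independent_mod_subset[OF level_complement(3)])
qed

lemma span_level_complements:
  assumes "well_ordered_set (range l1)" "well_ordered_set (range l2)"
  shows "span (\<Union>s t. level_complement s t) = UNIV"
proof -
  define B where "B = (\<Union>s t. level_complement s t)"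
  define R where "R = inv_image ({(x, y). x \<in> range l1 \<and> x < y} <*lex*> {(x, y). x \<in> range l2 \<and> x < y})
    (\<lambda>v. (l1 v, l2 v))"
  have "wf R"
    unfolding R_def using assms by (intro wf_inv_image wf_lex_prod wf_less_on_well_ordered_set)
  then have "v \<in> span B" for v
  proof (induction v rule: wf_induct_rule)
    case (less v)
    have "lower (l1 v) (l2 v) \<subseteq> span B"
      using less.IH by (auto simp: lower_def R_def order.order_iff_strict)
    moreover have "level_complement (l1 v) (l2 v) \<subseteq> span B"
      by (auto simp: B_def intro: span_base)
    ultimately have "span (lower (l1 v) (l2 v) \<union> level_complement (l1 v) (l2 v)) \<subseteq> span B"
      by (simp add: span_minimal)
    moreover have "v \<in> sublevel (l1 v) (l2 v)"
      by (simp add: sublevel_def)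
    ultimately show ?case
      using level_complement(2) by blast
  qed
  then show ?thesis
    by (auto simp: B_def)
qed

theorem exists_common_l_orthogonal_basis:
  assumes "well_ordered_set (l1 ` (UNIV - {0}))" "well_ordered_set (l2 ` (UNIV - {0}))"
  obtains B where "independent B" "span B = UNIV" "l_orthogonal scale l1 B" "l_orthogonal scale l2 B"
proof
  let ?B = "\<Union>s t. level_complement s t"
  show orthogonal_l1: "l_orthogonal scale l1 ?B" and "l_orthogonal scale l2 ?B"
    using l_orthogonal_if_independent_mod_lower independent_mod_lower_level_complements by blast+
  show "independent ?B"
    using orthogonal_l1 by (rule F1.independent_if_l_orthogonal)
  show "span ?B = UNIV"
    using assms by (intro span_level_complements F1.well_ordered_set_range F2.well_ordered_set_range)
qed

end

lemma filtered_vs_comp_linear: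
  assumes "filtered_vs scaleY l'" "Vector_Spaces.linear scaleX scaleY \<phi>" "inj \<phi>"
  shows "filtered_vs scaleX (l' \<circ> \<phi>)"
proof -
  interpret lin: Vector_Spaces.linear scaleX scaleY \<phi> by fact
  interpret Y: filtration scaleY l' by unfold_locales fact
  have "\<phi> v = 0 \<longleftrightarrow> v = 0" for v
    using assms(3) lin.inj_iff_eq_0 by auto
  then show ?thesis
    by (simp add: filtered_vs_def lin.vs1.vector_space_axioms lin.add lin.scale Y.l_add_le)
      (use assms(1) in \<open>simp add: filtered_vs_def\<close>)
qed

lemma l_orthogonal_linear_image:
  assumes orthogonal: "l_orthogonal scaleX (l' \<circ> \<phi>) B"
    and "Vector_Spaces.linear scaleX scaleY \<phi>" "inj \<phi>"
  shows "l_orthogonal scaleY l' (\<phi> ` B)"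
  unfolding l_orthogonal_def
proof (intro conjI allI impI)
  interpret lin: Vector_Spaces.linear scaleX scaleY \<phi> by fact
  have "\<phi> b \<noteq> 0" if "b \<in> B" for b
    using orthogonal that assms(3) lin.inj_iff_eq_0 unfolding l_orthogonal_def by blast
  then show "0 \<notin> \<phi> ` B"
    by force
  fix F c assume "finite F" "F \<subseteq> \<phi> ` B"
  then obtain G where G: "G \<subseteq> B" "F = \<phi> ` G"
    by (auto simp: subset_image_iff)
  have inj_G: "inj_on \<phi> G"
    using assms(3) by (rule inj_on_subset) simp
  then have "finite G"
    using \<open>finite F\<close> G(2) by (simp add: finite_image_iff)
  have "(\<Sum>w\<in>F. scaleY (c w) w) = \<phi> (\<Sum>v\<in>G. scaleX (c (\<phi> v)) v)"
    by (simp add: G(2) sum.reindex[OF inj_G] lin.sum lin.scale)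
  then have "l' (\<Sum>w\<in>F. scaleY (c w) w) = (l' \<circ> \<phi>) (\<Sum>v\<in>G. scaleX (c (\<phi> v)) v)"
    by simp
  also have "\<dots> = Sup ((l' \<circ> \<phi>) ` {v\<in>G. c (\<phi> v) \<noteq> 0})"
    using orthogonal \<open>finite G\<close> G(1) by (rule l_orthogonalD)
  also have "{v\<in>G. c (\<phi> v) \<noteq> 0} = G \<inter> \<phi> -` {w\<in>F. c w \<noteq> 0}"
    using G(2) by blast
  also have "(l' \<circ> \<phi>) ` (G \<inter> \<phi> -` {w\<in>F. c w \<noteq> 0}) = l' ` {w\<in>F. c w \<noteq> 0}"
    using G(2) by (auto simp: image_comp[symmetric])
  finally show "l' (\<Sum>w\<in>F. scaleY (c w) w) = Sup (l' ` {w\<in>F. c w \<noteq> 0})" .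
qed

lemma is_basis_linear_image:
  assumes "is_basis scaleX B" "Vector_Spaces.linear scaleX scaleY \<phi>" "bij \<phi>"
  shows "is_basis scaleY (\<phi> ` B)"
proof -
  interpret lin: Vector_Spaces.linear scaleX scaleY \<phi> by fact
  have independent: "lin.vs1.independent B" and spanning: "lin.vs1.span B = UNIV"
    using assms(1) by (simp_all add: is_basis_def)
  have "inj_on \<phi> (lin.vs1.span B)"
    using assms(3) bij_is_inj inj_on_subset by blast
  with independent have "lin.vs2.independent (\<phi> ` B)"
    by (rule lin.independent_injective_image)
  moreover have "lin.vs2.span (\<phi> ` B) = UNIV"
    using spanning assms(3) by (simp add: lin.span_image bij_is_surj)
  ultimately show ?thesis
    by (simp add: is_basis_def)
qed

theorem proposition3p19:
  fixes scaleX :: "'k::field \<Rightarrow> 'x::ab_group_add \<Rightarrow> 'x"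
    and scaleY :: "'k \<Rightarrow> 'y::ab_group_add \<Rightarrow> 'y"
    and l :: "'x \<Rightarrow> ereal" and l' :: "'y \<Rightarrow> ereal"
    and \<phi> :: "'x \<Rightarrow> 'y"
  assumes "filtered_vs scaleX l" and "filtered_vs scaleY l'"
    and "well_ordered_set (l ` (UNIV - {0}))"
    and "well_ordered_set (l' ` (UNIV - {0}))"
    and "Vector_Spaces.linear scaleX scaleY \<phi>" and "bij \<phi>"
  shows "\<exists>B. is_basis scaleX B \<and> l_orthogonal scaleX l B
             \<and> is_basis scaleY (\<phi> ` B) \<and> l_orthogonal scaleY l' (\<phi> ` B)"
proof -
  have inj: "inj \<phi>"
    using assms(6) by (rule bij_is_inj)
  have "filtered_vs scaleX (l' \<circ> \<phi>)"
    using assms(2,5) inj by (rule filtered_vs_comp_linear)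
  then interpret X: bifiltration scaleX l "l' \<circ> \<phi>"
    using assms(1) by (simp add: bifiltration_def filtration_def filtered_vs_def)
  interpret lin: Vector_Spaces.linear scaleX scaleY \<phi> by fact
  have "\<phi> ` (UNIV - {0}) = UNIV - {0}"
    using assms(6) by (simp add: image_set_diff bij_is_inj bij_is_surj)
  then have "well_ordered_set ((l' \<circ> \<phi>) ` (UNIV - {0}))"
    using assms(4) by (simp only: image_comp[symmetric])
  then obtain B where B: "X.independent B" "X.span B = UNIV"
    "l_orthogonal scaleX l B" "l_orthogonal scaleX (l' \<circ> \<phi>) B"
    by (rule X.exists_common_l_orthogonal_basis[OF assms(3)])
  have "is_basis scaleX B"
    using B(1,2) by (simp add: is_basis_def)
  moreover have "is_basis scaleY (\<phi> ` B)"
    using \<open>is_basis scaleX B\<close> assms(5,6) by (rule is_basis_linear_image)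
  moreover have "l_orthogonal scaleY l' (\<phi> ` B)"
    using B(4) assms(5) inj by (rule l_orthogonal_linear_image)
  ultimately show ?thesis
    using B(3) by blast
qed

end
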